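(* For every initial condition $z(0,0)\in\Lambda$ there exists a complete solution $z=(x,\sigma)$ of the hybrid system $\mathcal H=(C,f,D,g)$.
   Context: Network model. $(N,E)$ is a connected directed graph with $N=\{1,\dots,|N|\}$, $E\subseteq N\times N$, with arbitrary orientation: if $(i,j)\in E$ then $(j,i)\notin E$. For $j\in N$, "$i:i\to j$" ranges over $i$ with $(i,j)\in E$ and "$k:j\to k$" over $k$ with $(j,k)\in E$. Constants: $M_j>0$, $p^L_j\in\mathbb{R}$ ($j\in N$), $B_{ij}>0$ ($(i,j)\in E$). Continuous state $x=(\eta,\omega,x^s)\in\mathbb{R}^n$ with $\eta_{ij}\in\mathbb{R}$ ($(i,j)\in E$), $\omega_j\in\mathbb{R}$, $x^s_j\in\mathbb{R}^{n_j}$ ($j\in N$), $n=|E|+|N|+\sum_jn_j$; $p_{ij}=B_{ij}\sin\eta_{ij}$, $s_j=g_j(x^s_j,-\omega_j)$, where $f_j:\mathbb{R}^{n_j}\times\mathbb{R}\to\mathbb{R}^{n_j}$, $g_j:\mathbb{R}^{n_j}\times\mathbb{R}\to\mathbb{R}$ are globally Lipschitz. Hysteretic loads as a hybrid system. For each $j$ constants $\overline d_j\ge0$ and thresholds $\omega^1_j>\omega^0_j>0$ are given. ${\rm sgn}(a)=1$ if $a\ge0$ and $-1$ otherwise. The discrete state is $\sigma\in P^{|N|}$, $P=\{-1,0,1\}$, and $z=(x,\sigma)$. Let $\mathcal I_j(\omega_j)=\{{\rm sgn}(\omega_j)\}$ if $|\omega_j|>\omega^1_j$, $\{0\}$ if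 $|\omega_j|<\omega^0_j$, $\{0,{\rm sgn}(\omega_j)\}$ if $\omega^0_j\le|\omega_j|\le\omega^1_j$; $\Lambda=C=\{z\in\mathbb{R}^n\times P^{|N|}:\sigma_j\in\mathcal I_j(\omega_j)\ \forall j\}$. Flow map $f$ on $C$: $\dot\eta_{ij}=\omega_i-\omega_j$; $M_j\dot\omega_j=-p^L_j+s_j-\overline d_j\sigma_j-\sum_{k:j\to k}p_{jk}+\sum_{i:i\to j}p_{ij}$; $\dot x^s_j=f_j(x^s_j,-\omega_j)$; $\dot\sigma_j=0$. Jump set $D$: the set of $z\in\Lambda$ such that for some $j$, either ($|\omega_j|=\omega^1_j$ and $\sigma_j=0$) or ($|\omega_j|=\omega^0_j$ and $\sigma_j={\rm sgn}(\omega_j)$). Jump map $g$ on $D$: $x^+=x$; $\sigma_j^+={\rm sgn}(\omega_j)$ if $|\omega_j|=\omega^1_j$ and $\sigma_j=0$, $\sigma_j^+=0$ if $|\omega_j|=\omega^0_j$ and $\sigma_j={\rm sgn}(\omega_j)$, $\sigma_j^+=\sigma_j$ otherwise (so $g(D)\subseteq C$). Hybrid solutions. A hybrid time domain is a subset $K\subseteq\mathbb{R}_{\ge0}\times\mathbb{N}_0$ that is a union of a finite or infinite sequence of sets $[t_\ell,t_{\ell+1}]\times\{\ell\}$ ($0=t_0\le t_1\le\dots$), the last one (if any) possibly of the form $[t_\ell,t_{\ell+1})\times\{\ell\}$ or $[t_\ell,\infty)\times\{\ell\}$. A solution of $\mathcal H$ is a map $z:K\to\mathbb{R}^n\times P^{|N|}$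 on a hybrid time domain with $z(0,0)\in C\cup D$, such that for each $\ell$, $t\mapsto z(t,\ell)$ is locally absolutely continuous on $T_\ell=\{t:(t,\ell)\in K\}$, and if $T_\ell$ has nonempty interior then $z(t,\ell)\in C$ for all $t$ in the interior and $\dot z(t,\ell)=f(z(t,\ell))$ for almost all $t\in T_\ell$; and whenever $(t,\ell),(t,\ell+1)\in K$, $z(t,\ell)\in D$ and $z(t,\ell+1)=g(z(t,\ell))$. A solution is complete if $K$ is unbounded. *)

theory Defs
  imports "HOL-Analysis.Analysis"
begin

definition abs_cont_on :: "real set \<Rightarrow> (real \<Rightarrow> real) \<Rightarrow> bool" where
  "abs_cont_on S f \<longleftrightarrow>
     (\<forall>\<epsilon>>0. \<exists>\<delta>>0. \<forall>(n::nat) (a::nat \<Rightarrow> real) (b::nat \<Rightarrow> real).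
        (\<forall>k<n. a k \<le> b k \<and> {a k..b k} \<subseteq> S) \<and>
        (\<forall>k<n. \<forall>l<n. k \<noteq> l \<longrightarrow> b k \<le> a l \<or> b l \<le> a k) \<and>
        (\<Sum>k<n. b k - a k) < \<delta>
        \<longrightarrow> (\<Sum>k<n. \<bar>f (b k) - f (a k)\<bar>) < \<epsilon>)"

definition loc_abs_cont_on :: "real set \<Rightarrow> (real \<Rightarrow> real) \<Rightarrow> bool" where
  "loc_abs_cont_on T f \<longleftrightarrow> (\<forall>a b. {a..b} \<subseteq> T \<longrightarrow> abs_cont_on {a..b} f)"

definition network_graph :: "nat \<Rightarrow> (nat \<times> nat) set \<Rightarrow> bool" where
  "network_graph nN E \<longleftrightarrow>
     E \<subseteq> {1..nN} \<times> {1..nN} \<and>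
     (\<forall>i j. (i, j) \<in> E \<longrightarrow> (j, i) \<notin> E) \<and>
     (\<forall>i\<in>{1..nN}. \<forall>j\<in>{1..nN}. (i, j) \<in> (E \<union> E\<inverse>)\<^sup>*)"

text \<open>Vectors of R^m are represented as functions nat => real; only the components
  i < m are meaningful. trunc m v zeroes the remaining ones; vnorm m is the Euclidean norm.\<close>
definition trunc :: "nat \<Rightarrow> (nat \<Rightarrow> real) \<Rightarrow> (nat \<Rightarrow> real)" where
  "trunc m v = (\<lambda>i. if i < m then v i else 0)"

definition vnorm :: "nat \<Rightarrow> (nat \<Rightarrow> real) \<Rightarrow> real" where
  "vnorm m v = sqrt (\<Sum>i<m. (v i)\<^sup>2)"

definition lipschitz_vec :: "nat \<Rightarrow> ((nat \<Rightarrow> real) \<Rightarrow> real \<Rightarrow> (nat \<Rightarrow> real)) \<Rightarrow> bool" where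
  "lipschitz_vec m f \<longleftrightarrow> (\<exists>L. \<forall>a b w v.
      vnorm m (\<lambda>i. f (trunc m a) w i - f (trunc m b) v i) \<le> L * (vnorm m (\<lambda>i. a i - b i) + \<bar>w - v\<bar>))"

definition lipschitz_scal :: "nat \<Rightarrow> ((nat \<Rightarrow> real) \<Rightarrow> real \<Rightarrow> real) \<Rightarrow> bool" where
  "lipschitz_scal m g \<longleftrightarrow> (\<exists>L. \<forall>a b w v.
      \<bar>g (trunc m a) w - g (trunc m b) v\<bar> \<le> L * (vnorm m (\<lambda>i. a i - b i) + \<bar>w - v\<bar>))"

text \<open>z = (eta, omega, xs, sigma): eta indexed by edges, omega by nodes,
  xs j = x^s_j in R^(nd j) (components i < nd j), sigma j in {-1,0,1}.\<close>
type_synonym hstate = "((nat \<times> nat) \<Rightarrow> real) \<times> (nat \<Rightarrow> real) \<times> (nat \<Rightarrow> nat \<Rightarrow> real) \<times> (nat \<Rightarrow> int)"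

definition st_eta :: "hstate \<Rightarrow> (nat \<times> nat) \<Rightarrow> real" where "st_eta z = fst z"
definition st_omega :: "hstate \<Rightarrow> nat \<Rightarrow> real" where "st_omega z = fst (snd z)"
definition st_xs :: "hstate \<Rightarrow> nat \<Rightarrow> nat \<Rightarrow> real" where "st_xs z = fst (snd (snd z))"
definition st_sigma :: "hstate \<Rightarrow> nat \<Rightarrow> int" where "st_sigma z = snd (snd (snd z))"

definition hsgn :: "real \<Rightarrow> int" where
  "hsgn a = (if a \<ge> 0 then 1 else -1)"

definition Iset :: "real \<Rightarrow> real \<Rightarrow> real \<Rightarrow> int set" where
  "Iset w0 w1 w = (if \<bar>w\<bar> > w1 then {hsgn w}
                   else if \<bar>w\<bar> < w0 then {0}
                   else {0, hsgn w})"

text \<open>Lambda = C.\<close>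
definition inLambda :: "nat \<Rightarrow> (nat \<Rightarrow> real) \<Rightarrow> (nat \<Rightarrow> real) \<Rightarrow> hstate \<Rightarrow> bool" where
  "inLambda nN w0 w1 z \<longleftrightarrow>
     (\<forall>j\<in>{1..nN}. st_sigma z j \<in> Iset (w0 j) (w1 j) (st_omega z j))"

definition inD :: "nat \<Rightarrow> (nat \<Rightarrow> real) \<Rightarrow> (nat \<Rightarrow> real) \<Rightarrow> hstate \<Rightarrow> bool" where
  "inD nN w0 w1 z \<longleftrightarrow> inLambda nN w0 w1 z \<and>
     (\<exists>j\<in>{1..nN}. (\<bar>st_omega z j\<bar> = w1 j \<and> st_sigma z j = 0) \<or>
                   (\<bar>st_omega z j\<bar> = w0 j \<and> st_sigma z j = hsgn (st_omega z j)))"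

definition sigma_jump :: "(nat \<Rightarrow> real) \<Rightarrow> (nat \<Rightarrow> real) \<Rightarrow> hstate \<Rightarrow> nat \<Rightarrow> int" where
  "sigma_jump w0 w1 z j =
     (if \<bar>st_omega z j\<bar> = w1 j \<and> st_sigma z j = 0 then hsgn (st_omega z j)
      else if \<bar>st_omega z j\<bar> = w0 j \<and> st_sigma z j = hsgn (st_omega z j) then 0
      else st_sigma z j)"

definition is_jump :: "nat \<Rightarrow> (nat \<times> nat) set \<Rightarrow> (nat \<Rightarrow> nat) \<Rightarrow> (nat \<Rightarrow> real) \<Rightarrow> (nat \<Rightarrow> real)
     \<Rightarrow> hstate \<Rightarrow> hstate \<Rightarrow> bool" where
  "is_jump nN E nd w0 w1 z z' \<longleftrightarrow>
     (\<forall>e\<in>E. st_eta z' e = st_eta z e) \<and>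
     (\<forall>j\<in>{1..nN}. st_omega z' j = st_omega z j \<and>
                   (\<forall>i<nd j. st_xs z' j i = st_xs z j i) \<and>
                   st_sigma z' j = sigma_jump w0 w1 z j)"

definition omega_rhs :: "(nat \<times> nat) set \<Rightarrow> (nat \<Rightarrow> real) \<Rightarrow> (nat \<Rightarrow> real) \<Rightarrow> (nat \<times> nat \<Rightarrow> real)
     \<Rightarrow> (nat \<Rightarrow> real) \<Rightarrow> (nat \<Rightarrow> nat) \<Rightarrow> (nat \<Rightarrow> (nat \<Rightarrow> real) \<Rightarrow> real \<Rightarrow> real)
     \<Rightarrow> hstate \<Rightarrow> nat \<Rightarrow> real" where
  "omega_rhs E M pL B dbar nd g z j =
     (- pL j + g j (trunc (nd j) (st_xs z j)) (- st_omega z j) - dbar j * of_int (st_sigma z j)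
      - (\<Sum>k\<in>{k. (j, k) \<in> E}. B (j, k) * sin (st_eta z (j, k)))
      + (\<Sum>i\<in>{i. (i, j) \<in> E}. B (i, j) * sin (st_eta z (i, j)))) / M j"

definition hybrid_time_domain :: "(real \<times> nat) set \<Rightarrow> bool" where
  "hybrid_time_domain K \<longleftrightarrow>
     (\<exists>tt :: nat \<Rightarrow> real. tt 0 = 0 \<and> mono tt \<and>
       (K = (\<Union>l. {tt l..tt (Suc l)} \<times> {l}) \<or>
        (\<exists>J I. K = (\<Union>l<J. {tt l..tt (Suc l)} \<times> {l}) \<union> I \<times> {J} \<and>
               (I = {tt J..tt (Suc J)} \<or> I = {tt J..<tt (Suc J)} \<or> I = {tt J..}))))"

definition tdom :: "(real \<times> nat) set \<Rightarrow> nat \<Rightarrow> real set" where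
  "tdom K l = {t. (t, l) \<in> K}"

definition complete_domain :: "(real \<times> nat) set \<Rightarrow> bool" where
  "complete_domain K \<longleftrightarrow> \<not> bounded ((\<lambda>(t, l). (t, real l)) ` K)"

definition is_hybrid_solution ::
  "nat \<Rightarrow> (nat \<times> nat) set \<Rightarrow> (nat \<Rightarrow> real) \<Rightarrow> (nat \<Rightarrow> real) \<Rightarrow> (nat \<times> nat \<Rightarrow> real)
   \<Rightarrow> (nat \<Rightarrow> nat) \<Rightarrow> (nat \<Rightarrow> (nat \<Rightarrow> real) \<Rightarrow> real \<Rightarrow> (nat \<Rightarrow> real))
   \<Rightarrow> (nat \<Rightarrow> (nat \<Rightarrow> real) \<Rightarrow> real \<Rightarrow> real) \<Rightarrow> (nat \<Rightarrow> real) \<Rightarrow> (nat \<Rightarrow> real) \<Rightarrow> (nat \<Rightarrow> real)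
   \<Rightarrow> (real \<times> nat) set \<Rightarrow> (real \<Rightarrow> nat \<Rightarrow> hstate) \<Rightarrow> bool" where
  "is_hybrid_solution nN E M pL B nd f g dbar w0 w1 K z \<longleftrightarrow>
     hybrid_time_domain K \<and> (0, 0) \<in> K \<and>
     (inLambda nN w0 w1 (z 0 0) \<or> inD nN w0 w1 (z 0 0)) \<and>
     (\<forall>l.
       \<comment> \<open>local absolute continuity on T_l\<close>
       (\<forall>e\<in>E. loc_abs_cont_on (tdom K l) (\<lambda>t. st_eta (z t l) e)) \<and>
       (\<forall>j\<in>{1..nN}. loc_abs_cont_on (tdom K l) (\<lambda>t. st_omega (z t l) j) \<and>
          (\<forall>i<nd j. loc_abs_cont_on (tdom K l) (\<lambda>t. st_xs (z t l) j i)) \<and>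
          (\<forall>t\<in>tdom K l. \<forall>s\<in>tdom K l. st_sigma (z t l) j = st_sigma (z s l) j)) \<and>
       \<comment> \<open>flow in C on the interior\<close>
       (\<forall>t\<in>interior (tdom K l). inLambda nN w0 w1 (z t l)) \<and>
       \<comment> \<open>differential equation almost everywhere on T_l\<close>
       (AE t in lebesgue. t \<in> tdom K l \<longrightarrow>
          (\<forall>(i, j)\<in>E. ((\<lambda>s. st_eta (z s l) (i, j)) has_real_derivative
                 (st_omega (z t l) i - st_omega (z t l) j)) (at t within tdom K l)) \<and>
          (\<forall>j\<in>{1..nN}.
             ((\<lambda>s. st_omega (z s l) j) has_real_derivative
                 omega_rhs E M pL B dbar nd g (z t l) j) (at t within tdom K l) \<and>
             (\<forall>i<nd j. ((\<lambda>s. st_xs (z s l) j i) has_real_derivative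
                 f j (trunc (nd j) (st_xs (z t l) j)) (- st_omega (z t l) j) i) (at t within tdom K l)))) \<and>
       \<comment> \<open>jumps\<close>
       (\<forall>t. (t, l) \<in> K \<and> (t, Suc l) \<in> K \<longrightarrow>
          inD nN w0 w1 (z t l) \<and> is_jump nN E nd w0 w1 (z t l) (z t (Suc l))))"

end

theory Submission
  imports Defs "HOL-Probability.Discrete_Topology"
begin

text \<open>With the load states \<open>\<sigma>\<close> frozen, the network dynamics is a globally Lipschitz ODE in the
  finitely many continuous coordinates, so Picard iteration gives a solution for all forward
  time. A hybrid solution is built stage by stage: flow until the first time some frequency
  enters the switching zone of its load. By continuity and closedness of the admissible region
  the state at that time is still in \<open>\<Lambda>\<close>, and it lies in \<open>D\<close>, so the jump map applies and
  returns a state of \<open>\<Lambda>\<close>. Either some stage never switches and flows forever, or there are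
  infinitely many jumps; in both cases the hybrid time domain is unbounded.\<close>

section \<open>Global solutions of Lipschitz ODEs in Banach spaces\<close>

instance bcontfun :: (metric_space, banach) banach ..

lemma has_integral_power_0:
  assumes "0 \<le> c"
  shows "((\<lambda>s::real. s ^ k) has_integral c ^ Suc k / Suc k) {0..c}"
proof -
  have "((\<lambda>s::real. s ^ k) has_integral c ^ Suc k / Suc k - 0 ^ Suc k / Suc k) {0..c}"
  proof (intro fundamental_theorem_of_calculus assms)
    fix x :: real
    have "((\<lambda>s. s ^ Suc k / Suc k) has_real_derivative Suc k * x ^ k / Suc k) (at x)"
      using DERIV_pow[of "Suc k" x] by (intro DERIV_cdivide) simp
    then show "((\<lambda>s. s ^ Suc k / Suc k) has_vector_derivative x ^ k) (at x within {0..c})"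
      by (simp add: has_real_derivative_iff_has_vector_derivative[symmetric] has_field_derivative_at_within
          del: of_nat_Suc)
  qed
  then show ?thesis by simp
qed

lemma clamp_real_in: "0 \<le> T \<Longrightarrow> clamp 0 T (t::real) \<in> {0..T}"
  using clamp_in_interval[of 0 T t] by simp

context
  fixes F :: "'a::banach \<Rightarrow> 'a" and L :: real and x0 :: 'a
  assumes F_lipschitz: "\<And>x y. norm (F x - F y) \<le> L * norm (x - y)" and L_pos: "0 < L"
begin

lemma continuous_on_F_comp: "continuous_on S u \<Longrightarrow> continuous_on S (\<lambda>s. F (u s))"
proof -
  have "L-lipschitz_on UNIV F"
    using F_lipschitz L_pos by (intro lipschitz_onI) (auto simp: dist_norm)
  then have "continuous_on UNIV F" by (rule lipschitz_on_continuous_on)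
  then show "continuous_on S u \<Longrightarrow> continuous_on S (\<lambda>s. F (u s))"
    by (rule continuous_on_compose2) auto
qed

lemma integrable_F_bcontfun: "(\<lambda>s. F (apply_bcontfun (u :: real \<Rightarrow>\<^sub>C 'a) s)) integrable_on {a..b}"
  by (intro integrable_continuous_real continuous_on_F_comp continuous_on_apply_bcontfun)

definition picard :: "real \<Rightarrow> (real \<Rightarrow>\<^sub>C 'a) \<Rightarrow> real \<Rightarrow> 'a" where
  "picard T u t = x0 + integral {0..clamp 0 T t} (\<lambda>s. F (u s))"

lemma picard_bcontfun:
  assumes "0 \<le> T"
  shows "picard T u \<in> bcontfun"
proof -
  have "continuous_on (cbox 0 T) (\<lambda>t. x0 + integral {0..t} (\<lambda>s. F (u s)))"
    by (auto intro!: continuous_intros indefinite_integral_continuous_1 integrable_F_bcontfun)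
  then obtain v :: "real \<Rightarrow>\<^sub>C 'a" where "\<And>t. v t = x0 + integral {0..clamp 0 T t} (\<lambda>s. F (u s))"
    by (rule continuous_on_cbox_bcontfunE) blast
  then have "picard T u = apply_bcontfun v" by (auto simp: picard_def)
  then show ?thesis by (metis apply_bcontfun)
qed

definition picard_op :: "real \<Rightarrow> (real \<Rightarrow>\<^sub>C 'a) \<Rightarrow> (real \<Rightarrow>\<^sub>C 'a)" where
  "picard_op T u = Bcontfun (picard T u)"

lemma apply_picard_op: "0 \<le> T \<Longrightarrow> picard_op T u t = picard T u t"
  by (simp add: picard_op_def picard_bcontfun Bcontfun_inverse)

text \<open>Since \<open>(L T)^k / k! \<longrightarrow> 0\<close>, some iterate of the Picard operator is a contraction.\<close>
lemma picard_op_iterate_dist: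
  assumes "0 \<le> T"
  shows "norm ((picard_op T ^^ k) u t - (picard_op T ^^ k) v t)
           \<le> (L * clamp 0 T t) ^ k / fact k * dist u v"
proof (induction k arbitrary: t)
  case 0
  then show ?case using dist_bounded[of u t v] by (simp add: dist_norm)
next
  case (Suc k)
  define a where "a = (picard_op T ^^ k) u"
  define b where "b = (picard_op T ^^ k) v"
  define c where "c = clamp 0 T t"
  have c: "0 \<le> c" "c \<le> T" using clamp_real_in[OF assms] by (auto simp: c_def)
  have "(picard_op T ^^ Suc k) u t - (picard_op T ^^ Suc k) v t
      = integral {0..c} (\<lambda>s. F (a s) - F (b s))"
    by (simp add: a_def b_def c_def apply_picard_op[OF assms] picard_def
        integral_diff[OF integrable_F_bcontfun integrable_F_bcontfun])
  also have "norm \<dots> \<le> integral {0..c} (\<lambda>s. (L ^ Suc k * dist u v / fact k) * s ^ k)"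
  proof (intro integral_norm_bound_integral integrable_diff integrable_F_bcontfun
      integrable_continuous_real continuous_intros)
    fix s assume s: "s \<in> {0..c}"
    then have "clamp 0 T s = s" using c by simp
    then have "norm (a s - b s) \<le> (L * s) ^ k / fact k * dist u v"
      using Suc.IH[of s] by (simp add: a_def b_def)
    then have "norm (F (a s) - F (b s)) \<le> L * ((L * s) ^ k / fact k * dist u v)"
      using F_lipschitz[of "a s" "b s"] L_pos by (meson mult_left_mono less_imp_le order_trans)
    then show "norm (F (a s) - F (b s)) \<le> (L ^ Suc k * dist u v / fact k) * s ^ k"
      by (simp add: power_mult_distrib field_simps)
  qed
  also have "\<dots> = (L ^ Suc k * dist u v / fact k) * (c ^ Suc k / Suc k)"
    by (intro integral_unique has_integral_mult_right has_integral_power_0 c)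
  also have "\<dots> = (L * c) ^ Suc k / fact (Suc k) * dist u v"
    by (simp add: power_mult_distrib field_simps)
  finally show ?case by (simp add: c_def)
qed

lemma picard_op_unique_fixpoint:
  assumes "0 \<le> T"
  shows "\<exists>!u. picard_op T u = u"
proof -
  have "(\<lambda>n. (L * T) ^ n /\<^sub>R fact n) \<longlonglongrightarrow> 0"
    by (rule summable_LIMSEQ_zero[OF summable_exp_generic])
  then have "\<forall>\<^sub>F n in sequentially. (L * T) ^ n /\<^sub>R fact n < 1"
    by (rule order_tendstoD) simp
  then obtain k where k: "(L * T) ^ k / fact k < 1"
    by (auto simp: eventually_sequentially divide_inverse_commute)
  define q where "q = (L * T) ^ k / fact k"
  have q: "0 \<le> q" "q < 1" using k L_pos assms by (simp_all add: q_def)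
  have "dist ((picard_op T ^^ k) u) ((picard_op T ^^ k) v) \<le> q * dist u v" for u v
  proof (rule dist_bound)
    fix t
    have "(L * clamp 0 T t) ^ k \<le> (L * T) ^ k"
      using L_pos clamp_real_in[OF assms, of t] by (intro power_mono mult_left_mono) auto
    then have "(L * clamp 0 T t) ^ k / fact k * dist u v \<le> q * dist u v"
      unfolding q_def by (intro mult_right_mono divide_right_mono) auto
    then show "dist ((picard_op T ^^ k) u t) ((picard_op T ^^ k) v t) \<le> q * dist u v"
      using picard_op_iterate_dist[OF assms, where k=k and u=u and v=v and t=t] by (simp add: dist_norm)
  qed
  then obtain w where w: "(picard_op T ^^ k) w = w" and w_unique: "\<And>y. (picard_op T ^^ k) y = y \<Longrightarrow> y = w"
    using banach_fix_type[OF q] by metis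
  have "(picard_op T ^^ k) (picard_op T w) = picard_op T w"
    by (metis funpow_swap1 w)
  then have "picard_op T w = w" by (rule w_unique)
  moreover have "u = w" if "picard_op T u = u" for u
  proof -
    have "(picard_op T ^^ n) u = u" for n by (induction n) (simp_all add: that)
    then show ?thesis by (intro w_unique)
  qed
  ultimately show ?thesis by blast
qed

definition picard_solution :: "real \<Rightarrow> real \<Rightarrow>\<^sub>C 'a" where
  "picard_solution T = (THE u. picard_op T u = u)"

lemma picard_solution_fixpoint: "0 \<le> T \<Longrightarrow> picard_op T (picard_solution T) = picard_solution T"
  unfolding picard_solution_def by (rule theI'[OF picard_op_unique_fixpoint])

lemma picard_solution_eq:
  "0 \<le> T \<Longrightarrow> picard_solution T t = x0 + integral {0..clamp 0 T t} (\<lambda>s. F (picard_solution T s))"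
  by (metis apply_picard_op picard_def picard_solution_fixpoint)

text \<open>Solutions on different horizons agree: the longer one, frozen after time \<open>T\<close>,
  is a fixed point of the shorter horizon's operator.\<close>
lemma picard_solution_restrict:
  assumes "0 \<le> T" "T \<le> T'" "t \<in> {0..T}"
  shows "picard_solution T t = picard_solution T' t"
proof -
  have "continuous_on (cbox 0 T) (picard_solution T')"
    by (rule continuous_on_apply_bcontfun)
  then obtain w :: "real \<Rightarrow>\<^sub>C 'a" where w: "\<And>s. w s = picard_solution T' (clamp 0 T s)"
    by (rule continuous_on_cbox_bcontfunE) blast
  have "picard_op T w = w"
  proof (rule bcontfun_eqI)
    fix s
    have c: "clamp 0 T s \<in> {0..T}" by (rule clamp_real_in[OF assms(1)])
    have "picard_op T w s = x0 + integral {0..clamp 0 T s} (\<lambda>r. F (picard_solution T' r))"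
      using c by (auto simp: apply_picard_op[OF assms(1)] picard_def w intro!: integral_cong)
    also have "\<dots> = picard_solution T' (clamp 0 T s)"
      using picard_solution_eq[of T' "clamp 0 T s"] c assms by simp
    finally show "picard_op T w s = w s" by (simp add: w)
  qed
  then have "w = picard_solution T"
    using picard_op_unique_fixpoint[OF assms(1)] picard_solution_fixpoint[OF assms(1)] by blast
  then show ?thesis using w[of t] assms(3) by simp
qed

definition picard_flow :: "real \<Rightarrow> 'a" where
  "picard_flow t = picard_solution (t + 1) t"

lemma picard_flow_eq: "t \<in> {0..T} \<Longrightarrow> picard_flow t = picard_solution T t"
  unfolding picard_flow_def
  by (cases "t + 1 \<le> T") (auto intro: picard_solution_restrict picard_solution_restrict[symmetric])

lemma picard_flow_0: "picard_flow 0 = x0"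
  using picard_solution_eq[of 1 0] picard_flow_eq[of 0 1] by simp

lemma picard_flow_derivative:
  assumes "0 \<le> t"
  shows "(picard_flow has_vector_derivative F (picard_flow t)) (at t within {0..})"
proof -
  define T where "T = t + 1"
  have T: "0 \<le> T" "t \<in> {0..T}" using assms by (auto simp: T_def)
  define h where "h = (\<lambda>s. F (picard_solution T s))"
  have "continuous_on {0..T} h"
    unfolding h_def by (intro continuous_on_F_comp continuous_on_apply_bcontfun)
  then have integral_derivative:
    "((\<lambda>s. x0 + integral {0..s} h) has_vector_derivative h t) (at t within {0..T})"
    using T(2) by (auto intro!: derivative_eq_intros integral_has_vector_derivative)
  have "picard_flow s = x0 + integral {0..s} h" if "s \<in> {0..T}" for s
    using picard_solution_eq[OF T(1), of s] picard_flow_eq[OF that] that by (simp add: h_def)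
  then have "(picard_flow has_vector_derivative h t) (at t within {0..T})"
    by (rule has_vector_derivative_transform[OF T(2) _ integral_derivative])
  moreover have "at t within {0..} = at t within {0..T}"
    by (rule at_within_nhd[of _ "{..<T}"]) (auto simp: T_def)
  ultimately show ?thesis by (simp add: h_def picard_flow_eq[OF T(2)])
qed

end

lemma lipschitz_ode_solution_exists:
  fixes F :: "'a::banach \<Rightarrow> 'a"
  assumes lip: "\<And>x y. norm (F x - F y) \<le> L * norm (x - y)"
  shows "\<exists>X. X c = x0 \<and> (\<forall>t\<ge>c. (X has_vector_derivative F (X t)) (at t within {c..}))"
proof -
  define L' where "L' = max L 1"
  have lip': "norm (F x - F y) \<le> L' * norm (x - y)" for x y
    using lip[of x y] mult_right_mono[of L L' "norm (x - y)"] by (simp add: L'_def)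
  have L': "0 < L'" by (simp add: L'_def)
  define X where "X = (\<lambda>t. picard_flow F x0 (t - c))"
  have "(X has_vector_derivative F (X t)) (at t within {c..})" if "c \<le> t" for t
  proof -
    have "(\<lambda>s. s - c) ` {c..} = {0..}"
      by (auto simp: image_iff intro!: bexI[of _ "_ + c"])
    moreover have "(picard_flow F x0 has_vector_derivative F (X t)) (at (t - c) within {0..})"
      unfolding X_def by (rule picard_flow_derivative[OF lip' L']) (use that in simp)
    ultimately have "(picard_flow F x0 has_vector_derivative F (X t)) (at (t - c) within (\<lambda>s. s - c) ` {c..})"
      by simp
    moreover have shift: "((\<lambda>s. s - c) has_vector_derivative 1) (at t within {c..})"
      by (auto intro!: derivative_eq_intros)
    ultimately show ?thesis
      using vector_diff_chain_within[OF shift] by (simp add: X_def o_def)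
  qed
  moreover have "X c = x0" using picard_flow_0[OF lip' L'] by (simp add: X_def)
  ultimately show ?thesis by blast
qed

lemma abs_cont_on_lipschitz: "C-lipschitz_on S h \<Longrightarrow> abs_cont_on S h"
  unfolding abs_cont_on_def
proof (intro allI impI)
  fix \<epsilon> :: real assume "\<epsilon> > 0"
  assume lip: "C-lipschitz_on S h"
  define C' where "C' = C + 1"
  have C': "0 < C'" using lipschitz_on_nonneg[OF lip] by (simp add: C'_def)
  show "\<exists>\<delta>>0. \<forall>(n::nat) a b. (\<forall>k<n. a k \<le> b k \<and> {a k..b k} \<subseteq> S) \<and>
        (\<forall>k<n. \<forall>l<n. k \<noteq> l \<longrightarrow> b k \<le> a l \<or> b l \<le> a k) \<and> (\<Sum>k<n. b k - a k) < \<delta>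
        \<longrightarrow> (\<Sum>k<n. \<bar>h (b k) - h (a k)\<bar>) < \<epsilon>"
  proof (intro exI[of _ "\<epsilon> / C'"] conjI allI impI)
    show "0 < \<epsilon> / C'" using \<open>\<epsilon> > 0\<close> C' by simp
    fix n :: nat and a b :: "nat \<Rightarrow> real"
    assume H: "(\<forall>k<n. a k \<le> b k \<and> {a k..b k} \<subseteq> S) \<and>
        (\<forall>k<n. \<forall>l<n. k \<noteq> l \<longrightarrow> b k \<le> a l \<or> b l \<le> a k) \<and> (\<Sum>k<n. b k - a k) < \<epsilon> / C'"
    have "(\<Sum>k<n. \<bar>h (b k) - h (a k)\<bar>) \<le> (\<Sum>k<n. C' * (b k - a k))"
    proof (rule sum_mono)
      fix k assume "k \<in> {..<n}"
      then have "a k \<le> b k" "{a k..b k} \<subseteq> S" using H by auto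
      then have "a k \<in> S" "b k \<in> S" by auto
      then have "\<bar>h (b k) - h (a k)\<bar> \<le> C * (b k - a k)"
        using lipschitz_onD[OF lip, of "b k" "a k"] \<open>a k \<le> b k\<close> by (simp add: dist_real_def)
      then show "\<bar>h (b k) - h (a k)\<bar> \<le> C' * (b k - a k)"
        using \<open>a k \<le> b k\<close> by (simp add: C'_def distrib_right)
    qed
    also have "\<dots> = C' * (\<Sum>k<n. b k - a k)" by (simp add: sum_distrib_left)
    also have "\<dots> < \<epsilon>" using H C' by (simp add: pos_less_divide_eq mult.commute)
    finally show "(\<Sum>k<n. \<bar>h (b k) - h (a k)\<bar>) < \<epsilon>" .
  qed
qed

lemma loc_abs_cont_on_subset: "loc_abs_cont_on T h \<Longrightarrow> S \<subseteq> T \<Longrightarrow> loc_abs_cont_on S h"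
  unfolding loc_abs_cont_on_def by blast

lemma loc_abs_cont_on_continuous_derivative:
  assumes deriv: "\<And>t. t \<in> S \<Longrightarrow> (h has_real_derivative h' t) (at t within S)"
    and cont: "continuous_on S h'"
  shows "loc_abs_cont_on S h"
  unfolding loc_abs_cont_on_def
proof (intro allI impI)
  fix a b :: real assume ab: "{a..b} \<subseteq> S"
  obtain B where B: "\<And>t. t \<in> {a..b} \<Longrightarrow> norm (h' t) \<le> B"
    using compact_imp_bounded[OF compact_continuous_image[OF continuous_on_subset[OF cont ab]]]
    by (meson bounded_iff imageI compact_Icc)
  have "\<And>t. t \<in> {a..b} \<Longrightarrow> (h has_real_derivative h' t) (at t within {a..b})"
    using DERIV_subset[OF deriv ab] ab by blast
  then have "norm (h x - h y) \<le> B * norm (x - y)" if "x \<in> {a..b}" "y \<in> {a..b}" for x y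
    by (rule field_differentiable_bound[OF convex_real_interval(5) _ B that])
  then have "\<bar>h x - h y\<bar> \<le> B * \<bar>x - y\<bar>" if "x \<in> {a..b}" "y \<in> {a..b}" for x y
    using that by simp
  then have "(max B 0)-lipschitz_on {a..b} h"
    by (intro lipschitz_onI)
      (auto simp: dist_real_def intro: order_trans[OF _ mult_right_mono[OF max.cobounded1]])
  then show "abs_cont_on {a..b} h" by (rule abs_cont_on_lipschitz)
qed

definition sup_lipschitz :: "(('c \<Rightarrow> real) \<Rightarrow> real) \<Rightarrow> bool" where
  "sup_lipschitz h \<longleftrightarrow> (\<exists>L\<ge>0. \<forall>v w d. (\<forall>c. \<bar>v c - w c\<bar> \<le> d) \<longrightarrow> \<bar>h v - h w\<bar> \<le> L * d)"

lemma sup_lipschitzI: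
  "0 \<le> L \<Longrightarrow> (\<And>v w d. (\<And>c. \<bar>v c - w c\<bar> \<le> d) \<Longrightarrow> \<bar>h v - h w\<bar> \<le> L * d) \<Longrightarrow> sup_lipschitz h"
  unfolding sup_lipschitz_def by blast

lemma sup_lipschitz_const: "sup_lipschitz (\<lambda>v. a)"
  by (rule sup_lipschitzI[of 0]) simp_all

lemma sup_lipschitz_coord: "sup_lipschitz (\<lambda>v. v c)"
  by (rule sup_lipschitzI[of 1]) simp_all

lemma sup_lipschitz_add:
  fixes g h :: "('c \<Rightarrow> real) \<Rightarrow> real"
  assumes "sup_lipschitz g" "sup_lipschitz h"
  shows "sup_lipschitz (\<lambda>v. g v + h v)"
proof -
  obtain L1 L2 where L1: "0 \<le> L1" "\<forall>v w d. (\<forall>c. \<bar>v c - w c\<bar> \<le> d) \<longrightarrow> \<bar>g v - g w\<bar> \<le> L1 * d"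
    and L2: "0 \<le> L2" "\<forall>v w d. (\<forall>c. \<bar>v c - w c\<bar> \<le> d) \<longrightarrow> \<bar>h v - h w\<bar> \<le> L2 * d"
    using assms unfolding sup_lipschitz_def by blast
  show ?thesis
  proof (rule sup_lipschitzI[of "L1 + L2"])
    fix v w :: "'c \<Rightarrow> real" and d assume "\<And>c. \<bar>v c - w c\<bar> \<le> d"
    then have "\<bar>g v - g w\<bar> \<le> L1 * d" "\<bar>h v - h w\<bar> \<le> L2 * d" using L1(2) L2(2) by blast+
    then show "\<bar>g v + h v - (g w + h w)\<bar> \<le> (L1 + L2) * d" by (simp add: distrib_right abs_le_iff)
  qed (use L1 L2 in simp)
qed

lemma sup_lipschitz_mult:
  fixes h :: "('c \<Rightarrow> real) \<Rightarrow> real"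
  assumes "sup_lipschitz h"
  shows "sup_lipschitz (\<lambda>v. a * h v)"
proof -
  obtain L where L: "0 \<le> L" "\<forall>v w d. (\<forall>c. \<bar>v c - w c\<bar> \<le> d) \<longrightarrow> \<bar>h v - h w\<bar> \<le> L * d"
    using assms unfolding sup_lipschitz_def by blast
  show ?thesis
  proof (rule sup_lipschitzI[of "\<bar>a\<bar> * L"])
    fix v w :: "'c \<Rightarrow> real" and d assume "\<And>c. \<bar>v c - w c\<bar> \<le> d"
    then have "\<bar>h v - h w\<bar> \<le> L * d" using L(2) by blast
    then have "\<bar>a\<bar> * \<bar>h v - h w\<bar> \<le> \<bar>a\<bar> * L * d"
      by (metis abs_ge_zero mult.assoc mult_left_mono)
    then show "\<bar>a * h v - a * h w\<bar> \<le> \<bar>a\<bar> * L * d"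
      by (simp add: abs_mult flip: right_diff_distrib)
  qed (simp add: L(1))
qed

lemma sup_lipschitz_minus: "sup_lipschitz h \<Longrightarrow> sup_lipschitz (\<lambda>v. - h v)"
  using sup_lipschitz_mult[of h "-1"] by simp

lemma sup_lipschitz_diff: "sup_lipschitz g \<Longrightarrow> sup_lipschitz h \<Longrightarrow> sup_lipschitz (\<lambda>v. g v - h v)"
  using sup_lipschitz_add[of g "\<lambda>v. - h v"] sup_lipschitz_minus[of h] by simp

lemma sup_lipschitz_divide: "sup_lipschitz h \<Longrightarrow> sup_lipschitz (\<lambda>v. h v / a)"
  using sup_lipschitz_mult[of h "inverse a"] by (simp add: field_simps)

lemma sup_lipschitz_sum:
  "(\<And>k. k \<in> S \<Longrightarrow> sup_lipschitz (h k)) \<Longrightarrow> sup_lipschitz (\<lambda>v. \<Sum>k\<in>S. h k v)"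
  by (induction S rule: infinite_finite_induct) (auto intro: sup_lipschitz_const sup_lipschitz_add)

lemma abs_sin_diff_le: "\<bar>sin x - sin y\<bar> \<le> \<bar>x - y\<bar>" for x y :: real
proof -
  have "\<bar>sin x - sin y\<bar> = 2 * \<bar>sin ((x - y) / 2)\<bar> * \<bar>cos ((x + y) / 2)\<bar>"
    by (simp add: sin_diff_sin abs_mult)
  also have "\<dots> \<le> 2 * \<bar>(x - y) / 2\<bar> * 1"
    by (intro mult_mono abs_sin_x_le_abs_x abs_cos_le_one) auto
  finally show ?thesis by simp
qed

lemma sup_lipschitz_sin:
  fixes h :: "('c \<Rightarrow> real) \<Rightarrow> real"
  assumes "sup_lipschitz h"
  shows "sup_lipschitz (\<lambda>v. sin (h v))"
proof -
  obtain L where L: "0 \<le> L" "\<forall>v w d. (\<forall>c. \<bar>v c - w c\<bar> \<le> d) \<longrightarrow> \<bar>h v - h w\<bar> \<le> L * d"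
    using assms unfolding sup_lipschitz_def by blast
  show ?thesis
  proof (rule sup_lipschitzI[OF L(1)])
    fix v w :: "'c \<Rightarrow> real" and d assume "\<And>c. \<bar>v c - w c\<bar> \<le> d"
    then have "\<bar>h v - h w\<bar> \<le> L * d" using L(2) by blast
    then show "\<bar>sin (h v) - sin (h w)\<bar> \<le> L * d" using abs_sin_diff_le[of "h v" "h w"] by linarith
  qed
qed

lemma vnorm_nonneg: "0 \<le> vnorm m u"
  by (simp add: vnorm_def sum_nonneg)

lemma abs_le_vnorm: "i < m \<Longrightarrow> \<bar>u i\<bar> \<le> vnorm m u"
proof -
  assume "i < m"
  then have "(u i)\<^sup>2 \<le> (\<Sum>k<m. (u k)\<^sup>2)" by (intro member_le_sum) auto
  then show ?thesis unfolding vnorm_def by (metis real_sqrt_abs real_sqrt_le_mono)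
qed

lemma vnorm_le_sum_abs: "vnorm m u \<le> (\<Sum>i<m. \<bar>u i\<bar>)"
  using L2_set_le_sum_abs[of u "{..<m}"] by (simp add: vnorm_def L2_set_def)

lemma lipschitz_argument_bound:
  fixes v w :: "'c \<Rightarrow> real" and p :: "nat \<Rightarrow> 'c"
  assumes "\<And>c. \<bar>v c - w c\<bar> \<le> d"
  shows "vnorm m (\<lambda>i. v (p i) - w (p i)) + \<bar>- v q - - w q\<bar> \<le> (real m + 1) * d"
proof -
  have "vnorm m (\<lambda>i. v (p i) - w (p i)) \<le> (\<Sum>i<m. d)"
    using vnorm_le_sum_abs sum_mono[of "{..<m}" "\<lambda>i. \<bar>v (p i) - w (p i)\<bar>" "\<lambda>_. d"] assms
    by (meson order_trans)
  moreover have "\<bar>- v q - - w q\<bar> \<le> d" using assms[of q] by simp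
  ultimately show ?thesis by (simp add: distrib_right)
qed

lemma sup_lipschitz_lipschitz_scal:
  fixes p :: "nat \<Rightarrow> 'c"
  assumes "lipschitz_scal m G"
  shows "sup_lipschitz (\<lambda>v. G (trunc m (\<lambda>i. v (p i))) (- v q))"
proof -
  obtain L where L: "\<And>a b x y. \<bar>G (trunc m a) x - G (trunc m b) y\<bar>
                       \<le> L * (vnorm m (\<lambda>i. a i - b i) + \<bar>x - y\<bar>)"
    using assms unfolding lipschitz_scal_def by blast
  show ?thesis
  proof (rule sup_lipschitzI[of "\<bar>L\<bar> * (real m + 1)"])
    fix v w :: "'c \<Rightarrow> real" and d assume vw: "\<And>c. \<bar>v c - w c\<bar> \<le> d"
    have "\<bar>G (trunc m (\<lambda>i. v (p i))) (- v q) - G (trunc m (\<lambda>i. w (p i))) (- w q)\<bar>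
        \<le> \<bar>L\<bar> * (vnorm m (\<lambda>i. v (p i) - w (p i)) + \<bar>- v q - - w q\<bar>)"
      using L by (rule order_trans) (intro mult_right_mono, simp_all add: vnorm_nonneg)
    also have "\<dots> \<le> \<bar>L\<bar> * ((real m + 1) * d)"
      by (intro mult_left_mono lipschitz_argument_bound vw) simp
    finally show "\<bar>G (trunc m (\<lambda>i. v (p i))) (- v q) - G (trunc m (\<lambda>i. w (p i))) (- w q)\<bar>
        \<le> \<bar>L\<bar> * (real m + 1) * d" by (simp add: mult.assoc)
  qed simp
qed

lemma sup_lipschitz_lipschitz_vec:
  fixes p :: "nat \<Rightarrow> 'c"
  assumes "lipschitz_vec m G" "i < m"
  shows "sup_lipschitz (\<lambda>v. G (trunc m (\<lambda>i. v (p i))) (- v q) i)"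
proof -
  obtain L where L: "\<And>a b x y. vnorm m (\<lambda>i. G (trunc m a) x i - G (trunc m b) y i)
                       \<le> L * (vnorm m (\<lambda>i. a i - b i) + \<bar>x - y\<bar>)"
    using assms(1) unfolding lipschitz_vec_def by blast
  show ?thesis
  proof (rule sup_lipschitzI[of "\<bar>L\<bar> * (real m + 1)"])
    fix v w :: "'c \<Rightarrow> real" and d assume vw: "\<And>c. \<bar>v c - w c\<bar> \<le> d"
    have "\<bar>G (trunc m (\<lambda>i. v (p i))) (- v q) i - G (trunc m (\<lambda>i. w (p i))) (- w q) i\<bar>
        \<le> vnorm m (\<lambda>i. G (trunc m (\<lambda>i. v (p i))) (- v q) i - G (trunc m (\<lambda>i. w (p i))) (- w q) i)"
      by (rule abs_le_vnorm[OF assms(2)])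
    also have "\<dots> \<le> L * (vnorm m (\<lambda>i. v (p i) - w (p i)) + \<bar>- v q - - w q\<bar>)"
      by (rule L)
    also have "\<dots> \<le> \<bar>L\<bar> * (vnorm m (\<lambda>i. v (p i) - w (p i)) + \<bar>- v q - - w q\<bar>)"
      by (intro mult_right_mono) (simp_all add: vnorm_nonneg)
    also have "\<dots> \<le> \<bar>L\<bar> * ((real m + 1) * d)"
      by (intro mult_left_mono lipschitz_argument_bound vw) simp
    finally show "\<bar>G (trunc m (\<lambda>i. v (p i))) (- v q) i - G (trunc m (\<lambda>i. w (p i))) (- w q) i\<bar>
        \<le> \<bar>L\<bar> * (real m + 1) * d" by (simp add: mult.assoc)
  qed simp
qed

text \<open>A state with finitely many (but arbitrarily indexed) real coordinates is embedded into the
  Banach space of bounded functions on the discrete coordinate set, with the sup norm.\<close>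

definition coords :: "('c discrete \<Rightarrow>\<^sub>C real) \<Rightarrow> 'c \<Rightarrow> real" where
  "coords u c = u (discrete c)"

definition of_coords :: "('c \<Rightarrow> real) \<Rightarrow> 'c discrete \<Rightarrow>\<^sub>C real" where
  "of_coords v = Bcontfun (\<lambda>x. v (of_discrete x))"

lemma apply_of_coords:
  assumes "finite S" "\<And>c. c \<notin> S \<Longrightarrow> v c = 0"
  shows "of_coords v x = v (of_discrete x)"
proof -
  have "range (\<lambda>x. v (of_discrete x)) \<subseteq> insert 0 (v ` S)" using assms(2) by auto
  then have "bounded (range (\<lambda>x. v (of_discrete x)))"
    using assms(1) by (meson bounded_subset finite_imp_bounded finite_insert finite_imageI)
  moreover have "continuous_on UNIV (\<lambda>x. v (of_discrete x))"
    unfolding continuous_on_open_invariant by (auto intro: open_discrete)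
  ultimately show ?thesis by (simp add: of_coords_def bcontfun_def Bcontfun_inverse)
qed

lemma coords_of_coords: "finite S \<Longrightarrow> (\<And>c. c \<notin> S \<Longrightarrow> v c = 0) \<Longrightarrow> coords (of_coords v) = v"
  by (auto simp: coords_def apply_of_coords discrete_inverse)

lemma bounded_linear_coords: "bounded_linear (\<lambda>u. coords u c)"
  by (rule bounded_linear_intro[of _ 1]) (auto simp: coords_def simp flip: real_norm_def intro: norm_bounded)

lemma abs_coords_diff_le: "\<bar>coords u c - coords w c\<bar> \<le> norm (u - w)"
  using norm_bounded[of "u - w" "discrete c"] by (simp add: coords_def)

lemma lipschitz_of_coords:
  fixes h :: "('c \<Rightarrow> real) \<Rightarrow> 'c \<Rightarrow> real"
  assumes "finite S" and lip: "\<And>c. c \<in> S \<Longrightarrow> sup_lipschitz (\<lambda>v. h v c)"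
    and supp: "\<And>v c. c \<notin> S \<Longrightarrow> h v c = 0"
  shows "\<exists>K. \<forall>u w. norm (of_coords (h (coords u)) - of_coords (h (coords w))) \<le> K * norm (u - w)"
proof -
  have "\<forall>c\<in>S. \<exists>L\<ge>0. \<forall>v w d. (\<forall>c. \<bar>v c - w c\<bar> \<le> d) \<longrightarrow> \<bar>h v c - h w c\<bar> \<le> L * d"
    using lip unfolding sup_lipschitz_def by blast
  from bchoice[OF this] obtain L where L: "\<forall>c\<in>S. 0 \<le> L c \<and>
      (\<forall>v w d. (\<forall>c. \<bar>v c - w c\<bar> \<le> d) \<longrightarrow> \<bar>h v c - h w c\<bar> \<le> L c * d)"
    by blast
  have "norm (of_coords (h (coords u)) - of_coords (h (coords w))) \<le> (\<Sum>c\<in>S. L c) * norm (u - w)" for u w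
  proof (rule norm_bound)
    fix x :: "'c discrete"
    define c where "c = of_discrete x"
    have d: "\<And>c. \<bar>coords u c - coords w c\<bar> \<le> norm (u - w)" by (rule abs_coords_diff_le)
    have "\<bar>h (coords u) c - h (coords w) c\<bar> \<le> (\<Sum>c\<in>S. L c) * norm (u - w)"
    proof (cases "c \<in> S")
      case True
      then have "L c \<le> (\<Sum>c\<in>S. L c)" using L \<open>finite S\<close> by (intro member_le_sum) auto
      moreover have "\<forall>v w d. (\<forall>c. \<bar>v c - w c\<bar> \<le> d) \<longrightarrow> \<bar>h v c - h w c\<bar> \<le> L c * d"
        using L True by blast
      then have "\<bar>h (coords u) c - h (coords w) c\<bar> \<le> L c * norm (u - w)"
        using d by blast
      ultimately show ?thesis by (meson mult_right_mono norm_ge_zero order_trans)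
    qed (use supp L in \<open>simp add: sum_nonneg\<close>)
    then show "norm ((of_coords (h (coords u)) - of_coords (h (coords w))) x)
        \<le> (\<Sum>c\<in>S. L c) * norm (u - w)"
      using apply_of_coords[OF \<open>finite S\<close> supp] by (simp add: c_def)
  qed
  then show ?thesis by blast
qed

section \<open>The network dynamics for frozen load states\<close>

datatype coord = Eta "nat \<times> nat" | Omega nat | Xs nat nat

definition state_of :: "(nat \<Rightarrow> int) \<Rightarrow> (coord \<Rightarrow> real) \<Rightarrow> hstate" where
  "state_of \<sigma> v = (\<lambda>e. v (Eta e), \<lambda>j. v (Omega j), \<lambda>j i. v (Xs j i), \<sigma>)"

lemma state_of_simps [simp]:
  "st_eta (state_of \<sigma> v) e = v (Eta e)" "st_omega (state_of \<sigma> v) j = v (Omega j)"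
  "st_xs (state_of \<sigma> v) j = (\<lambda>i. v (Xs j i))" "st_sigma (state_of \<sigma> v) = \<sigma>"
  by (simp_all add: state_of_def st_eta_def st_omega_def st_xs_def st_sigma_def)

lemma trunc_cong: "(\<And>i. i < m \<Longrightarrow> u i = u' i) \<Longrightarrow> trunc m u = trunc m u'"
  by (auto simp: trunc_def)

lemma omega_rhs_cong:
  assumes "\<And>e. e \<in> E \<Longrightarrow> st_eta z e = st_eta z' e" "st_omega z j = st_omega z' j"
    "\<And>i. i < nd j \<Longrightarrow> st_xs z j i = st_xs z' j i" "st_sigma z j = st_sigma z' j"
  shows "omega_rhs E M pL B dbar nd g z j = omega_rhs E M pL B dbar nd g z' j"
proof -
  have "trunc (nd j) (st_xs z j) = trunc (nd j) (st_xs z' j)" by (rule trunc_cong) (rule assms(3))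
  moreover have "(\<Sum>k\<in>{k. (j, k) \<in> E}. B (j, k) * sin (st_eta z (j, k)))
      = (\<Sum>k\<in>{k. (j, k) \<in> E}. B (j, k) * sin (st_eta z' (j, k)))"
    "(\<Sum>i\<in>{i. (i, j) \<in> E}. B (i, j) * sin (st_eta z (i, j)))
      = (\<Sum>i\<in>{i. (i, j) \<in> E}. B (i, j) * sin (st_eta z' (i, j)))"
    using assms(1) by (auto intro: sum.cong)
  ultimately show ?thesis using assms(2,4) by (simp add: omega_rhs_def)
qed

locale network =
  fixes nN :: nat and E :: "(nat \<times> nat) set" and M pL dbar :: "nat \<Rightarrow> real"
    and B :: "nat \<times> nat \<Rightarrow> real" and nd :: "nat \<Rightarrow> nat"
    and f :: "nat \<Rightarrow> (nat \<Rightarrow> real) \<Rightarrow> real \<Rightarrow> (nat \<Rightarrow> real)"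
    and g :: "nat \<Rightarrow> (nat \<Rightarrow> real) \<Rightarrow> real \<Rightarrow> real"
  assumes edges_in_nodes: "E \<subseteq> {1..nN} \<times> {1..nN}"
    and f_lipschitz: "\<And>j. j \<in> {1..nN} \<Longrightarrow> lipschitz_vec (nd j) (f j)"
    and g_lipschitz: "\<And>j. j \<in> {1..nN} \<Longrightarrow> lipschitz_scal (nd j) (g j)"
begin

definition support :: "coord set" where
  "support = Eta ` E \<union> Omega ` {1..nN} \<union> (\<lambda>(j, i). Xs j i) ` (SIGMA j:{1..nN}. {..<nd j})"

lemma finite_support: "finite support"
  using finite_subset[OF edges_in_nodes] by (simp add: support_def)

fun field :: "(nat \<Rightarrow> int) \<Rightarrow> (coord \<Rightarrow> real) \<Rightarrow> coord \<Rightarrow> real" where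
  "field \<sigma> v (Eta (i, j)) = (if (i, j) \<in> E then v (Omega i) - v (Omega j) else 0)"
| "field \<sigma> v (Omega j) =
     (if j \<in> {1..nN} then omega_rhs E M pL B dbar nd g (state_of \<sigma> v) j else 0)"
| "field \<sigma> v (Xs j i) =
     (if j \<in> {1..nN} \<and> i < nd j then f j (trunc (nd j) (\<lambda>i. v (Xs j i))) (- v (Omega j)) i else 0)"

lemma field_outside_support: "c \<notin> support \<Longrightarrow> field \<sigma> v c = 0"
  by (cases c) (auto simp: support_def)

lemma sup_lipschitz_field:
  assumes "c \<in> support"
  shows "sup_lipschitz (\<lambda>v. field \<sigma> v c)"
proof (cases c)
  case (Eta e)
  then show ?thesis using assms
    by (cases e) (auto simp: support_def intro!: sup_lipschitz_diff sup_lipschitz_coord)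
next
  case (Omega j)
  then have j: "j \<in> {1..nN}" using assms by (auto simp: support_def)
  have "sup_lipschitz (\<lambda>v. g j (trunc (nd j) (\<lambda>i. v (Xs j i))) (- v (Omega j)))"
    by (rule sup_lipschitz_lipschitz_scal[OF g_lipschitz[OF j]])
  moreover have "sup_lipschitz (\<lambda>v. \<Sum>k\<in>K. b k * sin (v (Eta (p k))))" for K b p
    by (intro sup_lipschitz_sum sup_lipschitz_mult sup_lipschitz_sin sup_lipschitz_coord)
  ultimately show ?thesis
    unfolding Omega field.simps if_P[OF j] omega_rhs_def state_of_simps
    by (intro sup_lipschitz_divide sup_lipschitz_add sup_lipschitz_diff sup_lipschitz_const)
next
  case (Xs j i)
  then have ji: "j \<in> {1..nN} \<and> i < nd j" using assms by (auto simp: support_def)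
  have "sup_lipschitz (\<lambda>v. f j (trunc (nd j) (\<lambda>i. v (Xs j i))) (- v (Omega j)) i)"
    using ji f_lipschitz by (blast intro: sup_lipschitz_lipschitz_vec)
  then show ?thesis unfolding Xs field.simps if_P[OF ji] .
qed

definition vector_field :: "(nat \<Rightarrow> int) \<Rightarrow> (coord discrete \<Rightarrow>\<^sub>C real) \<Rightarrow> coord discrete \<Rightarrow>\<^sub>C real" where
  "vector_field \<sigma> u = of_coords (field \<sigma> (coords u))"

lemma vector_field_lipschitz: "\<exists>K. \<forall>u w. norm (vector_field \<sigma> u - vector_field \<sigma> w) \<le> K * norm (u - w)"
  unfolding vector_field_def
  by (rule lipschitz_of_coords[OF finite_support sup_lipschitz_field field_outside_support])

lemma continuous_on_vector_field: "continuous_on S (vector_field \<sigma>)"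
proof -
  obtain K where K: "\<And>u w. norm (vector_field \<sigma> u - vector_field \<sigma> w) \<le> K * norm (u - w)"
    using vector_field_lipschitz by blast
  have "(max K 0)-lipschitz_on S (vector_field \<sigma>)"
    by (intro lipschitz_onI)
      (auto simp: dist_norm intro: order_trans[OF K mult_right_mono[OF max.cobounded1]])
  then show ?thesis by (rule lipschitz_on_continuous_on)
qed

lemma coords_vector_field: "coords (vector_field \<sigma> u) = field \<sigma> (coords u)"
  unfolding vector_field_def by (rule coords_of_coords[OF finite_support field_outside_support])

definition encode :: "hstate \<Rightarrow> coord \<Rightarrow> real" where
  "encode z c = (if c \<in> support then
      (case c of Eta e \<Rightarrow> st_eta z e | Omega j \<Rightarrow> st_omega z j | Xs j i \<Rightarrow> st_xs z j i) else 0)"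

text \<open>Coordinates outside the support are not governed by the dynamics; they keep the values
  of the state the stage started from.\<close>
definition decode :: "hstate \<Rightarrow> (coord \<Rightarrow> real) \<Rightarrow> hstate" where
  "decode z v = ((\<lambda>e. if e \<in> E then v (Eta e) else st_eta z e),
                 (\<lambda>j. if j \<in> {1..nN} then v (Omega j) else st_omega z j),
                 (\<lambda>j i. if j \<in> {1..nN} \<and> i < nd j then v (Xs j i) else st_xs z j i),
                 st_sigma z)"

lemma decode_simps:
  "e \<in> E \<Longrightarrow> st_eta (decode z v) e = v (Eta e)"
  "j \<in> {1..nN} \<Longrightarrow> st_omega (decode z v) j = v (Omega j)"
  "j \<in> {1..nN} \<Longrightarrow> i < nd j \<Longrightarrow> st_xs (decode z v) j i = v (Xs j i)"
  "st_sigma (decode z v) = st_sigma z"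
  by (simp_all add: decode_def st_eta_def st_omega_def st_xs_def st_sigma_def)

lemma decode_encode: "decode z (encode z) = z"
  by (auto simp: decode_def encode_def support_def st_eta_def st_omega_def st_xs_def st_sigma_def
      fun_eq_iff prod_eq_iff)

definition stage_solution :: "hstate \<Rightarrow> real \<Rightarrow> real \<Rightarrow> coord discrete \<Rightarrow>\<^sub>C real" where
  "stage_solution z c = (SOME X. X c = of_coords (encode z) \<and>
     (\<forall>t\<ge>c. (X has_vector_derivative vector_field (st_sigma z) (X t)) (at t within {c..})))"

lemma stage_solution:
  "stage_solution z c c = of_coords (encode z)"
  "t \<ge> c \<Longrightarrow> (stage_solution z c has_vector_derivative vector_field (st_sigma z) (stage_solution z c t))
     (at t within {c..})"
proof -
  obtain K where "\<And>u w. norm (vector_field (st_sigma z) u - vector_field (st_sigma z) w) \<le> K * norm (u - w)"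
    using vector_field_lipschitz by blast
  from lipschitz_ode_solution_exists[OF this]
  have "\<exists>X. X c = of_coords (encode z) \<and>
     (\<forall>t\<ge>c. (X has_vector_derivative vector_field (st_sigma z) (X t)) (at t within {c..}))" .
  from someI_ex[OF this] show "stage_solution z c c = of_coords (encode z)"
    "t \<ge> c \<Longrightarrow> (stage_solution z c has_vector_derivative vector_field (st_sigma z) (stage_solution z c t))
     (at t within {c..})"
    unfolding stage_solution_def by blast+
qed

definition stage_flow :: "hstate \<Rightarrow> real \<Rightarrow> real \<Rightarrow> hstate" where
  "stage_flow z c t = decode z (coords (stage_solution z c t))"

lemma stage_flow_start: "stage_flow z c c = z"
  using coords_of_coords[OF finite_support, of "encode z"]
  by (simp add: stage_flow_def stage_solution(1) encode_def decode_encode)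

lemma st_sigma_stage_flow: "st_sigma (stage_flow z c t) = st_sigma z"
  by (simp add: stage_flow_def decode_simps)

lemma stage_coord_derivative:
  assumes "c \<le> t"
  shows "((\<lambda>s. coords (stage_solution z c s) k) has_real_derivative
           field (st_sigma z) (coords (stage_solution z c t)) k) (at t within {c..})"
  using bounded_linear.has_vector_derivative[OF bounded_linear_coords stage_solution(2)[OF assms]]
  by (simp add: coords_vector_field has_real_derivative_iff_has_vector_derivative)

lemma continuous_on_stage_solution: "continuous_on {c..} (stage_solution z c)"
  unfolding continuous_on_eq_continuous_within
proof
  fix t assume "t \<in> {c..}"
  then show "continuous (at t within {c..}) (stage_solution z c)"
    by (intro has_vector_derivative_continuous[OF stage_solution(2)]) simp
qed

lemma continuous_on_stage_coord: "continuous_on {c..} (\<lambda>s. coords (stage_solution z c s) k)"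
  by (rule bounded_linear.continuous_on[OF bounded_linear_coords continuous_on_stage_solution])

lemma loc_abs_cont_on_stage_coord:
  "S \<subseteq> {c..} \<Longrightarrow> loc_abs_cont_on S (\<lambda>s. coords (stage_solution z c s) k)"
proof (rule loc_abs_cont_on_subset[OF loc_abs_cont_on_continuous_derivative])
  show "continuous_on {c..} (\<lambda>s. field (st_sigma z) (coords (stage_solution z c s)) k)"
    unfolding coords_vector_field[symmetric]
    by (intro bounded_linear.continuous_on[OF bounded_linear_coords]
        continuous_on_compose2[OF continuous_on_vector_field continuous_on_stage_solution]) auto
qed (use stage_coord_derivative in auto)

lemma stage_flow_coords:
  "e \<in> E \<Longrightarrow> st_eta (stage_flow z c t) e = coords (stage_solution z c t) (Eta e)"
  "j \<in> {1..nN} \<Longrightarrow> st_omega (stage_flow z c t) j = coords (stage_solution z c t) (Omega j)"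
  "j \<in> {1..nN} \<Longrightarrow> i < nd j \<Longrightarrow> st_xs (stage_flow z c t) j i = coords (stage_solution z c t) (Xs j i)"
  by (simp_all add: stage_flow_def decode_simps)

lemma loc_abs_cont_on_stage_flow:
  assumes "S \<subseteq> {c..}"
  shows "e \<in> E \<Longrightarrow> loc_abs_cont_on S (\<lambda>t. st_eta (stage_flow z c t) e)"
    "j \<in> {1..nN} \<Longrightarrow> loc_abs_cont_on S (\<lambda>t. st_omega (stage_flow z c t) j)"
    "j \<in> {1..nN} \<Longrightarrow> i < nd j \<Longrightarrow> loc_abs_cont_on S (\<lambda>t. st_xs (stage_flow z c t) j i)"
  by (simp_all add: stage_flow_coords loc_abs_cont_on_stage_coord[OF assms])

lemma continuous_on_stage_flow_omega:
  "j \<in> {1..nN} \<Longrightarrow> continuous_on {c..} (\<lambda>t. st_omega (stage_flow z c t) j)"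
  by (simp add: stage_flow_coords continuous_on_stage_coord)

lemma stage_flow_derivatives:
  assumes "S \<subseteq> {c..}" "t \<in> S"
  shows "(i, j) \<in> E \<Longrightarrow> ((\<lambda>s. st_eta (stage_flow z c s) (i, j)) has_real_derivative
           st_omega (stage_flow z c t) i - st_omega (stage_flow z c t) j) (at t within S)"
    and "j \<in> {1..nN} \<Longrightarrow> ((\<lambda>s. st_omega (stage_flow z c s) j) has_real_derivative
           omega_rhs E M pL B dbar nd g (stage_flow z c t) j) (at t within S)"
    and "j \<in> {1..nN} \<Longrightarrow> i < nd j \<Longrightarrow> ((\<lambda>s. st_xs (stage_flow z c s) j i) has_real_derivative
           f j (trunc (nd j) (st_xs (stage_flow z c t) j)) (- st_omega (stage_flow z c t) j) i)
           (at t within S)"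
proof -
  define v where "v = coords (stage_solution z c t)"
  have "c \<le> t" using assms by auto
  have deriv: "((\<lambda>s. coords (stage_solution z c s) k) has_real_derivative field (st_sigma z) v k)
      (at t within S)" for k
    unfolding v_def by (rule DERIV_subset[OF stage_coord_derivative[OF \<open>c \<le> t\<close>] assms(1)])
  show "(i, j) \<in> E \<Longrightarrow> ((\<lambda>s. st_eta (stage_flow z c s) (i, j)) has_real_derivative
           st_omega (stage_flow z c t) i - st_omega (stage_flow z c t) j) (at t within S)"
  proof -
    assume ij: "(i, j) \<in> E"
    then have "i \<in> {1..nN}" "j \<in> {1..nN}" using edges_in_nodes by blast+
    then show ?thesis using deriv[of "Eta (i, j)"] ij by (simp add: stage_flow_coords v_def)
  qed
  show "j \<in> {1..nN} \<Longrightarrow> ((\<lambda>s. st_omega (stage_flow z c s) j) has_real_derivative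
           omega_rhs E M pL B dbar nd g (stage_flow z c t) j) (at t within S)"
  proof -
    assume j: "j \<in> {1..nN}"
    have "omega_rhs E M pL B dbar nd g (state_of (st_sigma z) v) j
        = omega_rhs E M pL B dbar nd g (stage_flow z c t) j"
      using stage_flow_coords j by (intro omega_rhs_cong) (simp_all add: v_def st_sigma_stage_flow)
    then have val: "field (st_sigma z) v (Omega j) = omega_rhs E M pL B dbar nd g (stage_flow z c t) j"
      using j by simp
    have "(\<lambda>s. st_omega (stage_flow z c s) j) = (\<lambda>s. coords (stage_solution z c s) (Omega j))"
      using stage_flow_coords(2)[OF j] by simp
    then show ?thesis unfolding val[symmetric] by (simp only: deriv)
  qed
  show "j \<in> {1..nN} \<Longrightarrow> i < nd j \<Longrightarrow> ((\<lambda>s. st_xs (stage_flow z c s) j i) has_real_derivative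
           f j (trunc (nd j) (st_xs (stage_flow z c t) j)) (- st_omega (stage_flow z c t) j) i)
           (at t within S)"
  proof -
    assume ji: "j \<in> {1..nN}" "i < nd j"
    have "trunc (nd j) (\<lambda>i. v (Xs j i)) = trunc (nd j) (st_xs (stage_flow z c t) j)"
      using stage_flow_coords(3)[OF ji(1)] by (intro trunc_cong) (simp add: v_def)
    moreover have "v (Omega j) = st_omega (stage_flow z c t) j"
      using stage_flow_coords(2)[OF ji(1)] by (simp add: v_def)
    ultimately have val: "field (st_sigma z) v (Xs j i)
        = f j (trunc (nd j) (st_xs (stage_flow z c t) j)) (- st_omega (stage_flow z c t) j) i"
      using ji by simp
    have "(\<lambda>s. st_xs (stage_flow z c s) j i) = (\<lambda>s. coords (stage_solution z c s) (Xs j i))"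
      using stage_flow_coords(3)[OF ji] by simp
    then show ?thesis unfolding val[symmetric] by (simp only: deriv)
  qed
qed

end

section \<open>Hysteresis\<close>

lemma Iset_iff:
  assumes "0 < a" "a \<le> b"
  shows "\<sigma> \<in> Iset a b x \<longleftrightarrow> (\<sigma> = 0 \<and> \<bar>x\<bar> \<le> b) \<or> (\<sigma> = 1 \<and> a \<le> x) \<or> (\<sigma> = -1 \<and> x \<le> - a)"
  using assms by (auto simp: Iset_def hsgn_def)

lemma closed_Iset: "0 < a \<Longrightarrow> a \<le> b \<Longrightarrow> closed {x. \<sigma> \<in> Iset a b x}"
  unfolding Iset_iff
  by (intro closed_Collect_disj closed_Collect_conj closed_Collect_le closed_Collect_const
      continuous_intros)

text \<open>The frequency region in which the load state \<open>\<sigma>\<close> can no longer flow: \<open>\<sigma> = 0\<close> has reached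
  the upper threshold, or \<open>\<sigma> = \<plusminus>1\<close> has fallen back to the lower one.\<close>
definition switch_zone :: "int \<Rightarrow> real \<Rightarrow> real \<Rightarrow> real \<Rightarrow> bool" where
  "switch_zone \<sigma> a b x \<longleftrightarrow> (\<sigma> = 0 \<and> b \<le> \<bar>x\<bar>) \<or> (\<sigma> = 1 \<and> x \<le> a) \<or> (\<sigma> = -1 \<and> - a \<le> x)"

lemma closed_switch_zone: "closed {x. switch_zone \<sigma> a b x}"
  unfolding switch_zone_def
  by (intro closed_Collect_disj closed_Collect_conj closed_Collect_le closed_Collect_const
      continuous_intros)

lemma Iset_if_not_switch_zone:
  "0 < a \<Longrightarrow> a < b \<Longrightarrow> \<sigma> \<in> {-1, 0, 1} \<Longrightarrow> \<not> switch_zone \<sigma> a b x \<Longrightarrow> \<sigma> \<in> Iset a b x"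
  by (auto simp: Iset_iff switch_zone_def)

lemma Iset_switch_zone_threshold:
  "0 < a \<Longrightarrow> a < b \<Longrightarrow> \<sigma> \<in> Iset a b x \<Longrightarrow> switch_zone \<sigma> a b x
     \<Longrightarrow> (\<bar>x\<bar> = b \<and> \<sigma> = 0) \<or> (\<bar>x\<bar> = a \<and> \<sigma> = hsgn x)"
  by (auto simp: Iset_iff switch_zone_def hsgn_def)

lemma Iset_values: "\<sigma> \<in> Iset a b x \<Longrightarrow> \<sigma> \<in> {-1, 0, 1}"
  by (auto simp: Iset_def hsgn_def split: if_splits)

definition jump :: "(nat \<Rightarrow> real) \<Rightarrow> (nat \<Rightarrow> real) \<Rightarrow> hstate \<Rightarrow> hstate" where
  "jump w0 w1 z = (st_eta z, st_omega z, st_xs z, sigma_jump w0 w1 z)"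

lemma jump_simps:
  "st_eta (jump w0 w1 z) = st_eta z" "st_omega (jump w0 w1 z) = st_omega z"
  "st_xs (jump w0 w1 z) = st_xs z" "st_sigma (jump w0 w1 z) = sigma_jump w0 w1 z"
  by (simp_all add: jump_def st_eta_def st_omega_def st_xs_def st_sigma_def)

lemma is_jump_jump: "is_jump nN E nd w0 w1 z (jump w0 w1 z)"
  by (simp add: is_jump_def jump_simps)

lemma inLambda_jump:
  assumes "\<And>j. j \<in> {1..nN} \<Longrightarrow> 0 < w0 j \<and> w0 j < w1 j" and "inLambda nN w0 w1 z"
  shows "inLambda nN w0 w1 (jump w0 w1 z)"
  using assms by (fastforce simp: inLambda_def jump_simps sigma_jump_def Iset_def)

locale hysteretic_network = network +
  fixes w0 w1 :: "nat \<Rightarrow> real"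
  assumes thresholds: "\<And>j. j \<in> {1..nN} \<Longrightarrow> 0 < w0 j \<and> w0 j < w1 j"
begin

definition switch_times :: "hstate \<Rightarrow> real \<Rightarrow> real set" where
  "switch_times z c = {t. c \<le> t \<and>
     (\<exists>j\<in>{1..nN}. switch_zone (st_sigma z j) (w0 j) (w1 j) (st_omega (stage_flow z c t) j))}"

text \<open>The time at which the stage started in \<open>z\<close> at time \<open>c\<close> must jump; the value \<open>c\<close> in
  the case without switching is never used.\<close>
definition switch_time :: "hstate \<Rightarrow> real \<Rightarrow> real" where
  "switch_time z c = (if switch_times z c = {} then c else Inf (switch_times z c))"

lemma closed_switch_times: "closed (switch_times z c)"
proof -
  have "switch_times z c = (\<Union>j\<in>{1..nN}. {c..} \<inter>
      (\<lambda>t. st_omega (stage_flow z c t) j) -` {x. switch_zone (st_sigma z j) (w0 j) (w1 j) x})"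
    by (auto simp: switch_times_def)
  also have "closed \<dots>"
    by (intro closed_UN finite_atLeastAtMost ballI continuous_closed_preimage
        continuous_on_stage_flow_omega closed_atLeast closed_switch_zone)
  finally show ?thesis .
qed

lemma bdd_below_switch_times: "bdd_below (switch_times z c)"
  by (rule bdd_belowI[of _ c]) (simp add: switch_times_def)

lemma switch_time_ge: "c \<le> switch_time z c"
  by (cases "switch_times z c = {}")
    (auto simp: switch_time_def switch_times_def intro: cInf_greatest)

lemma switch_time_in_switch_times:
  "switch_times z c \<noteq> {} \<Longrightarrow> switch_time z c \<in> switch_times z c"
  unfolding switch_time_def
  using closed_contains_Inf[OF _ bdd_below_switch_times closed_switch_times] by simp

lemma not_in_switch_times: "t < switch_time z c \<Longrightarrow> t \<notin> switch_times z c"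
  using cInf_lower[OF _ bdd_below_switch_times, of t z c]
  by (auto simp: switch_time_def split: if_splits)

lemma stage_flow_inLambda:
  assumes z: "inLambda nN w0 w1 z" and t: "c \<le> t" "switch_times z c \<noteq> {} \<Longrightarrow> t \<le> switch_time z c"
  shows "inLambda nN w0 w1 (stage_flow z c t)"
  unfolding inLambda_def
proof
  fix j assume j: "j \<in> {1..nN}"
  have w: "0 < w0 j" "w0 j < w1 j" using thresholds[OF j] by auto
  have \<sigma>: "st_sigma z j \<in> Iset (w0 j) (w1 j) (st_omega z j)" using z j by (simp add: inLambda_def)
  define h where "h = (\<lambda>u. st_omega (stage_flow z c u) j)"
  define T where "T = insert c {c..<t}"
  \<comment> \<open>before the switching time the state cannot leave \<open>\<Lambda>\<close>; by continuity and closedness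
    of the admissible region it is still in \<open>\<Lambda>\<close> at that time\<close>
  have image_T: "h ` T \<subseteq> {x. st_sigma z j \<in> Iset (w0 j) (w1 j) x}"
  proof safe
    fix u assume "u \<in> T"
    show "st_sigma z j \<in> Iset (w0 j) (w1 j) (h u)"
    proof (cases "u = c")
      case False
      with \<open>u \<in> T\<close> have u: "c \<le> u" "u < t" by (auto simp: T_def)
      have "u \<notin> switch_times z c"
      proof (cases "switch_times z c = {}")
        case False
        then show ?thesis using t(2) u(2) by (intro not_in_switch_times) simp
      qed simp
      with u(1) show ?thesis
        using j Iset_if_not_switch_zone[OF w Iset_values[OF \<sigma>]] by (auto simp: switch_times_def h_def)
    qed (use \<sigma> in \<open>simp add: h_def stage_flow_start\<close>)
  qed
  have "closure T \<subseteq> {c..}"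
    by (rule closure_minimal) (auto simp: T_def)
  then have "continuous_on (closure T) h"
    unfolding h_def by (rule continuous_on_subset[OF continuous_on_stage_flow_omega[OF j]])
  then have "h ` closure T \<subseteq> {x. st_sigma z j \<in> Iset (w0 j) (w1 j) x}"
    using image_closure_subset closed_Iset[OF w(1) less_imp_le[OF w(2)]] image_T by blast
  moreover have "t \<in> closure T"
    using t(1) closure_atLeastLessThan[of c t] by (cases "c < t") (auto simp: T_def closure_insert)
  ultimately have "h t \<in> {x. st_sigma z j \<in> Iset (w0 j) (w1 j) x}"
    by blast
  then show "st_sigma (stage_flow z c t) j \<in> Iset (w0 j) (w1 j) (st_omega (stage_flow z c t) j)"
    by (simp add: h_def st_sigma_stage_flow)
qed

lemma stage_flow_switch_time_inD:
  assumes z: "inLambda nN w0 w1 z" and ne: "switch_times z c \<noteq> {}"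
  shows "inD nN w0 w1 (stage_flow z c (switch_time z c))"
proof -
  let ?z = "stage_flow z c (switch_time z c)"
  have \<Lambda>: "inLambda nN w0 w1 ?z"
    by (rule stage_flow_inLambda[OF z switch_time_ge]) simp
  obtain j where j: "j \<in> {1..nN}"
    and "switch_zone (st_sigma ?z j) (w0 j) (w1 j) (st_omega ?z j)"
    using switch_time_in_switch_times[OF ne] by (auto simp: switch_times_def st_sigma_stage_flow)
  moreover have "st_sigma ?z j \<in> Iset (w0 j) (w1 j) (st_omega ?z j)"
    using \<Lambda> j by (simp add: inLambda_def)
  ultimately show ?thesis
    using Iset_switch_zone_threshold thresholds[OF j] \<Lambda> unfolding inD_def by blast
qed

end

section \<open>Concatenating the stages\<close>

context hysteretic_network
begin

primrec stage :: "hstate \<Rightarrow> nat \<Rightarrow> hstate \<times> real" where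
  "stage z0 0 = (z0, 0)"
| "stage z0 (Suc l) =
     (let z = fst (stage z0 l); c = snd (stage z0 l); \<tau> = switch_time z c
      in (jump w0 w1 (stage_flow z c \<tau>), \<tau>))"

definition stage_state :: "hstate \<Rightarrow> nat \<Rightarrow> hstate" where
  "stage_state z0 l = fst (stage z0 l)"

definition stage_start :: "hstate \<Rightarrow> nat \<Rightarrow> real" where
  "stage_start z0 l = snd (stage z0 l)"

lemma stage_simps:
  "stage_state z0 0 = z0" "stage_start z0 0 = 0"
  "stage_start z0 (Suc l) = switch_time (stage_state z0 l) (stage_start z0 l)"
  "stage_state z0 (Suc l) = jump w0 w1 (stage_flow (stage_state z0 l) (stage_start z0 l) (stage_start z0 (Suc l)))"
  by (simp_all add: stage_state_def stage_start_def Let_def)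

lemma mono_stage_start: "mono (stage_start z0)"
  by (rule incseq_SucI) (simp add: stage_simps switch_time_ge)

definition last_stage :: "hstate \<Rightarrow> nat \<Rightarrow> bool" where
  "last_stage z0 l \<longleftrightarrow> switch_times (stage_state z0 l) (stage_start z0 l) = {}"

definition solution_domain :: "hstate \<Rightarrow> (real \<times> nat) set" where
  "solution_domain z0 = {(t, l). (\<forall>m<l. \<not> last_stage z0 m) \<and> stage_start z0 l \<le> t \<and>
     (\<not> last_stage z0 l \<longrightarrow> t \<le> stage_start z0 (Suc l))}"

definition solution :: "hstate \<Rightarrow> real \<Rightarrow> nat \<Rightarrow> hstate" where
  "solution z0 t l = stage_flow (stage_state z0 l) (stage_start z0 l) t"

lemma solution_0_0: "solution z0 0 0 = z0"
  by (simp add: solution_def stage_simps stage_flow_start)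

lemma tdom_solution_domain:
  "t \<in> tdom (solution_domain z0) l \<longleftrightarrow> (\<forall>m<l. \<not> last_stage z0 m) \<and> stage_start z0 l \<le> t \<and>
     (\<not> last_stage z0 l \<longrightarrow> t \<le> stage_start z0 (Suc l))"
  by (simp add: tdom_def solution_domain_def)

lemma tdom_solution_domain_subset: "tdom (solution_domain z0) l \<subseteq> {stage_start z0 l..}"
  by (auto simp: tdom_solution_domain)

lemma stage_state_inLambda:
  assumes "inLambda nN w0 w1 z0" "\<forall>m<l. \<not> last_stage z0 m"
  shows "inLambda nN w0 w1 (stage_state z0 l)"
  using assms(2)
proof (induction l)
  case (Suc l)
  then have "inD nN w0 w1 (stage_flow (stage_state z0 l) (stage_start z0 l) (stage_start z0 (Suc l)))"
    by (simp add: stage_simps last_stage_def stage_flow_switch_time_inD)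
  then show ?case
    using inLambda_jump[OF thresholds] by (simp add: stage_simps inD_def)
qed (simp add: stage_simps assms(1))

lemma solution_inLambda:
  assumes "inLambda nN w0 w1 z0" "t \<in> tdom (solution_domain z0) l"
  shows "inLambda nN w0 w1 (solution z0 t l)"
  using assms(2) unfolding solution_def tdom_solution_domain
  by (auto simp: last_stage_def stage_simps intro!: stage_flow_inLambda stage_state_inLambda[OF assms(1)])

lemma solution_jump:
  assumes "inLambda nN w0 w1 z0" "(t, l) \<in> solution_domain z0" "(t, Suc l) \<in> solution_domain z0"
  shows "inD nN w0 w1 (solution z0 t l) \<and> is_jump nN E nd w0 w1 (solution z0 t l) (solution z0 t (Suc l))"
proof -
  have stages: "\<forall>m<Suc l. \<not> last_stage z0 m" and t: "t = stage_start z0 (Suc l)"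
    using assms(2,3) by (auto simp: solution_domain_def)
  then have "inD nN w0 w1 (solution z0 t l)"
    using stage_flow_switch_time_inD[OF stage_state_inLambda[OF assms(1)]]
    by (simp add: solution_def stage_simps last_stage_def)
  moreover have "solution z0 t (Suc l) = jump w0 w1 (solution z0 t l)"
    by (simp add: solution_def stage_flow_start t stage_simps(4))
  ultimately show ?thesis by (simp add: is_jump_jump)
qed

lemma hybrid_time_domain_solution_domain: "hybrid_time_domain (solution_domain z0)"
  unfolding hybrid_time_domain_def
proof (intro exI[of _ "stage_start z0"] conjI)
  show "stage_start z0 0 = 0" "mono (stage_start z0)" by (simp_all add: stage_simps mono_stage_start)
  show "solution_domain z0 = (\<Union>l. {stage_start z0 l..stage_start z0 (Suc l)} \<times> {l}) \<or>
    (\<exists>J I. solution_domain z0 = (\<Union>l<J. {stage_start z0 l..stage_start z0 (Suc l)} \<times> {l}) \<union> I \<times> {J} \<and>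
       (I = {stage_start z0 J..stage_start z0 (Suc J)} \<or> I = {stage_start z0 J..<stage_start z0 (Suc J)}
        \<or> I = {stage_start z0 J..}))"
  proof (cases "\<exists>l. last_stage z0 l")
    case True
    then obtain J where J: "last_stage z0 J" "\<And>m. m < J \<Longrightarrow> \<not> last_stage z0 m"
      by (auto simp: exists_least_iff[of "last_stage z0"])
    have "solution_domain z0
        = (\<Union>l<J. {stage_start z0 l..stage_start z0 (Suc l)} \<times> {l}) \<union> {stage_start z0 J..} \<times> {J}"
    proof (intro set_eqI iffI)
      fix x assume "x \<in> solution_domain z0"
      moreover obtain t l where x: "x = (t, l)" by fastforce
      ultimately have l: "\<forall>m<l. \<not> last_stage z0 m" "stage_start z0 l \<le> t"
        "\<not> last_stage z0 l \<longrightarrow> t \<le> stage_start z0 (Suc l)"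
        by (auto simp: solution_domain_def)
      then have "l \<le> J" using J(1) by (meson not_le)
      then show "x \<in> (\<Union>l<J. {stage_start z0 l..stage_start z0 (Suc l)} \<times> {l}) \<union> {stage_start z0 J..} \<times> {J}"
        using l J(2) by (cases "l = J") (auto simp: x)
    qed (use J in \<open>auto simp: solution_domain_def\<close>)
    then show ?thesis by blast
  qed (auto simp: solution_domain_def)
qed

lemma complete_domain_solution_domain: "complete_domain (solution_domain z0)"
  unfolding complete_domain_def bounded_iff
proof
  assume "\<exists>R. \<forall>x\<in>(\<lambda>(t, l). (t, real l)) ` solution_domain z0. norm x \<le> R"
  then obtain R where R: "\<And>t l. (t, l) \<in> solution_domain z0 \<Longrightarrow> norm (t, real l) \<le> R"
    by fastforce
  show False
  proof (cases "\<exists>l. last_stage z0 l")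
    case True
    \<comment> \<open>the last stage flows forever\<close>
    then obtain J where J: "last_stage z0 J" "\<And>m. m < J \<Longrightarrow> \<not> last_stage z0 m"
      by (auto simp: exists_least_iff[of "last_stage z0"])
    define t where "t = max (stage_start z0 J) (R + 1)"
    have "(t, J) \<in> solution_domain z0" using J by (auto simp: solution_domain_def t_def)
    then show False using R[of t J] norm_fst_le[of t "real J"] by (simp add: t_def)
  next
    case False
    \<comment> \<open>otherwise there are infinitely many jumps\<close>
    obtain l :: nat where l: "R < real l" using reals_Archimedean2 by blast
    have "(stage_start z0 l, l) \<in> solution_domain z0"
      using False mono_stage_start[of z0] by (auto simp: solution_domain_def incseq_Suc_iff)
    then show False using R norm_snd_le[of "real l" "stage_start z0 l"] l by force
  qed
qed

theorem is_hybrid_solution_solution: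
  assumes z0: "inLambda nN w0 w1 z0"
  shows "is_hybrid_solution nN E M pL B nd f g dbar w0 w1 (solution_domain z0) (solution z0)"
  unfolding is_hybrid_solution_def
proof (intro conjI allI)
  show "hybrid_time_domain (solution_domain z0)" by (rule hybrid_time_domain_solution_domain)
  show "(0, 0) \<in> solution_domain z0"
    by (simp add: solution_domain_def stage_simps switch_time_ge)
  show "inLambda nN w0 w1 (solution z0 0 0) \<or> inD nN w0 w1 (solution z0 0 0)"
    using z0 by (simp add: solution_0_0)
  fix l
  let ?T = "tdom (solution_domain z0) l"
  let ?z = "stage_state z0 l" and ?c = "stage_start z0 l"
  note flow = loc_abs_cont_on_stage_flow[OF tdom_solution_domain_subset[of z0 l], where z = ?z]
    stage_flow_derivatives[OF tdom_solution_domain_subset[of z0 l], where z = ?z]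
  show "\<forall>e\<in>E. loc_abs_cont_on ?T (\<lambda>t. st_eta (solution z0 t l) e)"
    using flow(1) by (simp add: solution_def)
  show "\<forall>j\<in>{1..nN}. loc_abs_cont_on ?T (\<lambda>t. st_omega (solution z0 t l) j) \<and>
      (\<forall>i<nd j. loc_abs_cont_on ?T (\<lambda>t. st_xs (solution z0 t l) j i)) \<and>
      (\<forall>t\<in>?T. \<forall>s\<in>?T. st_sigma (solution z0 t l) j = st_sigma (solution z0 s l) j)"
    using flow(2,3) by (simp add: solution_def st_sigma_stage_flow)
  show "\<forall>t\<in>interior ?T. inLambda nN w0 w1 (solution z0 t l)"
    using solution_inLambda[OF z0] interior_subset by blast
  show "AE t in lebesgue. t \<in> ?T \<longrightarrow>
      (\<forall>(i, j)\<in>E. ((\<lambda>s. st_eta (solution z0 s l) (i, j)) has_real_derivative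
          st_omega (solution z0 t l) i - st_omega (solution z0 t l) j) (at t within ?T)) \<and>
      (\<forall>j\<in>{1..nN}.
         ((\<lambda>s. st_omega (solution z0 s l) j) has_real_derivative
            omega_rhs E M pL B dbar nd g (solution z0 t l) j) (at t within ?T) \<and>
         (\<forall>i<nd j. ((\<lambda>s. st_xs (solution z0 s l) j i) has_real_derivative
            f j (trunc (nd j) (st_xs (solution z0 t l) j)) (- st_omega (solution z0 t l) j) i)
            (at t within ?T)))"
    using flow(4-6) by (intro AE_I2) (auto simp: solution_def)
  fix t
  show "(t, l) \<in> solution_domain z0 \<and> (t, Suc l) \<in> solution_domain z0 \<longrightarrow>
      inD nN w0 w1 (solution z0 t l) \<and> is_jump nN E nd w0 w1 (solution z0 t l) (solution z0 t (Suc l))"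
    using solution_jump[OF z0] by blast
qed

end

theorem lemma4:
  fixes nN :: nat and E :: "(nat \<times> nat) set"
    and M pL dbar w0 w1 :: "nat \<Rightarrow> real" and B :: "nat \<times> nat \<Rightarrow> real"
    and nd :: "nat \<Rightarrow> nat"
    and f :: "nat \<Rightarrow> (nat \<Rightarrow> real) \<Rightarrow> real \<Rightarrow> (nat \<Rightarrow> real)"
    and g :: "nat \<Rightarrow> (nat \<Rightarrow> real) \<Rightarrow> real \<Rightarrow> real"
    and z0 :: hstate
  assumes "network_graph nN E"
    and "\<forall>j\<in>{1..nN}. M j > 0"
    and "\<forall>e\<in>E. B e > 0"
    and "\<forall>j\<in>{1..nN}. dbar j \<ge> 0"
    and "\<forall>j\<in>{1..nN}. 0 < w0 j \<and> w0 j < w1 j"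
    and "\<forall>j\<in>{1..nN}. lipschitz_vec (nd j) (f j)"
    and "\<forall>j\<in>{1..nN}. lipschitz_scal (nd j) (g j)"
    and "inLambda nN w0 w1 z0"
  shows "\<exists>K z. is_hybrid_solution nN E M pL B nd f g dbar w0 w1 K z \<and>
               z 0 0 = z0 \<and> complete_domain K"
proof -
  have "E \<subseteq> {1..nN} \<times> {1..nN}" using assms(1) by (simp add: network_graph_def)
  then interpret hysteretic_network nN E M pL dbar B nd f g w0 w1
    using assms(5-7) by unfold_locales auto
  show ?thesis
    using is_hybrid_solution_solution[OF assms(8)] solution_0_0 complete_domain_solution_domain
    by blast
qed

end
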